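(* Let $n\ge 2$ and let $\mathcal{P}_E(SD_{8n})$ be the enhanced power graph of the semidihedral group $SD_{8n}$. Put $\alpha=8n-1$, $\beta=6n-1$, $\gamma=4n-1$, and let $Q$ be the $(n+4)\times(n+4)$ matrix with rows and columns indexed by $1,\dots,n+4$ given by: row $1$: $Q_{11}=0$, $Q_{12}=\sqrt{\alpha^2+\beta^2}$, $Q_{13}=(4n-2)\sqrt{\alpha^2+\gamma^2}$, $Q_{1j}=2\sqrt{\alpha^2+9}$ for $4\le j\le n+3$, $Q_{1,n+4}=2n\sqrt{\alpha^2+1}$; row $2$: $Q_{21}=\sqrt{\alpha^2+\beta^2}$, $Q_{22}=0$, $Q_{23}=(4n-2)\sqrt{\beta^2+\gamma^2}$, $Q_{2j}=2\sqrt{\beta^2+9}$ for $4\le j\le n+3$, $Q_{2,n+4}=0$; row $3$: $Q_{31}=\sqrt{\alpha^2+\gamma^2}$, $Q_{32}=\sqrt{\beta^2+\gamma^2}$, $Q_{33}=(4n-3)(4n-1)\sqrt2$, all other entries $0$; row $i$ for $4\le i\le n+3$: $Q_{i1}=\sqrt{\alpha^2+9}$, $Q_{i2}=\sqrt{\beta^2+9}$, $Q_{ii}=3\sqrt2$, all other entries $0$; row $n+4$: $Q_{n+4,1}=\sqrt{\alpha^2+1}$, all other entries $0$. Then the Sombor spectrum of $\mathcal{P}_E(SD_{8n})$ consists of $-(4n-1)\sqrt2$ with multiplicity $4n-3$, $0$ with multiplicity $2n-1$, $-3\sqrt2$ with multiplicity $n$, together with the eigenvalues (with multiplicity) of $Q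$.
   Context: For a finite simple graph $\Gamma$ with vertices $u_1,\dots,u_N$, the Sombor matrix $S(\Gamma)$ has $(i,j)$ entry $\sqrt{\deg(u_i)^2+\deg(u_j)^2}$ if $u_i,u_j$ are adjacent and $0$ otherwise; the Sombor spectrum is the multiset of its eigenvalues. $SD_{8n}=\langle a,b: a^{4n}=b^2=e,\ ba=a^{2n-1}b\rangle$ of order $8n$. The enhanced power graph $\mathcal{P}_E(G)$ of a group $G$ has vertex set $G$, two distinct vertices being adjacent iff both belong to a common cyclic subgroup of $G$. *)

theory Defs
  imports "HOL-Algebra.Generated_Groups" "Jordan_Normal_Form.Char_Poly"
    "HOL-Computational_Algebra.Fundamental_Theorem_Algebra"
begin

text \<open>Semidihedral group SD_{8n} = < a, b | a^{4n} = b^2 = e, b a = a^{2n-1} b >,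
  realised concretely: the pair (i, j) with i < 4n, j < 2 stands for a^i b^j.
  Since b a^k = a^{k(2n-1)} b, we get (a^i b^j)(a^k b^l) = a^{i + k (2n-1)^j} b^{j+l}.\<close>
definition SD :: "nat \<Rightarrow> (nat \<times> nat) monoid" where
  "SD n = \<lparr> carrier = {0..<4*n} \<times> {0..<2},
            monoid.mult = (\<lambda>(i,j) (k,l). ((i + k * (2*n - 1)^j) mod (4*n), (j + l) mod 2)),
            one = (0, 0) \<rparr>"

definition enhanced_power_adj :: "('a, 'b) monoid_scheme \<Rightarrow> 'a \<Rightarrow> 'a \<Rightarrow> bool" where
  "enhanced_power_adj G x y \<longleftrightarrow> x \<in> carrier G \<and> y \<in> carrier G \<and> x \<noteq> y \<and>
     (\<exists>z \<in> carrier G. x \<in> generate G {z} \<and> y \<in> generate G {z})"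

definition graph_deg :: "'a set \<Rightarrow> ('a \<Rightarrow> 'a \<Rightarrow> bool) \<Rightarrow> 'a \<Rightarrow> nat" where
  "graph_deg V E x = card {y \<in> V. E x y}"

definition sombor_matrix :: "'a list \<Rightarrow> ('a \<Rightarrow> 'a \<Rightarrow> bool) \<Rightarrow> real mat" where
  "sombor_matrix vs E = mat (length vs) (length vs) (\<lambda>(i,j).
     if E (vs ! i) (vs ! j)
     then sqrt (real (graph_deg (set vs) E (vs ! i))^2 + real (graph_deg (set vs) E (vs ! j))^2)
     else 0)"

definition spectrum_mset :: "real mat \<Rightarrow> complex multiset" where
  "spectrum_mset A = proots (char_poly (map_mat complex_of_real A))"

text \<open>The (n+4) x (n+4) matrix Q of the paper, with rows/columns 1..n+4 shifted to 0..n+3.\<close>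
definition Qmat :: "nat \<Rightarrow> real mat" where
  "Qmat n = (let \<alpha> = real (8*n - 1); \<beta> = real (6*n - 1); \<gamma> = real (4*n - 1) in
    mat (n+4) (n+4) (\<lambda>(i,j).
      if i = 0 then
        (if j = 0 then 0
         else if j = 1 then sqrt (\<alpha>^2 + \<beta>^2)
         else if j = 2 then (4*real n - 2) * sqrt (\<alpha>^2 + \<gamma>^2)
         else if 3 \<le> j \<and> j \<le> n+2 then 2 * sqrt (\<alpha>^2 + 9)
         else 2 * real n * sqrt (\<alpha>^2 + 1))
      else if i = 1 then
        (if j = 0 then sqrt (\<alpha>^2 + \<beta>^2)
         else if j = 1 then 0
         else if j = 2 then (4*real n - 2) * sqrt (\<beta>^2 + \<gamma>^2)
         else if 3 \<le> j \<and> j \<le> n+2 then 2 * sqrt (\<beta>^2 + 9)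
         else 0)
      else if i = 2 then
        (if j = 0 then sqrt (\<alpha>^2 + \<gamma>^2)
         else if j = 1 then sqrt (\<beta>^2 + \<gamma>^2)
         else if j = 2 then (4*real n - 3) * (4*real n - 1) * sqrt 2
         else 0)
      else if 3 \<le> i \<and> i \<le> n+2 then
        (if j = 0 then sqrt (\<alpha>^2 + 9)
         else if j = 1 then sqrt (\<beta>^2 + 9)
         else if j = i then 3 * sqrt 2
         else 0)
      else
        (if j = 0 then sqrt (\<alpha>^2 + 1) else 0)))"

end

theory Submission
  imports Defs "HOL-Algebra.Multiplicative_Group"
begin

(* The vertices of the enhanced power graph of SD_8n fall into n + 4 classes of twins: {e},
   {a^2n}, the other 4n - 2 powers of a, the n pairs {a^i b, a^(i+2n) b} with i odd (together with
   e and a^2n such a pair forms a cyclic subgroup of order 4), and the 2n involutions a^i b with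
   i even.  Adjacency and degrees depend only on the classes, so off the diagonal the Sombor matrix
   S takes a constant value s(C,D) on each block C x D.  The class indicator vectors span an
   S-invariant subspace on which S acts by the quotient matrix Q, and for u, v in one class C the
   vector e_u - e_v is an eigenvector with eigenvalue -s(C,C).  So the spectrum of S consists of
   that of Q and of -s(C,C) taken |C| - 1 times for every class C. *)

section \<open>Matrices that are constant on the blocks of a partition\<close>

definition class_matrix :: "'a list \<Rightarrow> ('a \<Rightarrow> nat) \<Rightarrow> (nat \<Rightarrow> nat \<Rightarrow> 'b :: zero) \<Rightarrow> 'b mat" where
  "class_matrix vs cell f = mat (length vs) (length vs)
     (\<lambda>(i,j). if i = j then 0 else f (cell (vs ! i)) (cell (vs ! j)))"

text \<open>The action of the class matrix on the span of the class indicator vectors.\<close>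
definition quotient_matrix ::
    "'a list \<Rightarrow> ('a \<Rightarrow> nat) \<Rightarrow> nat \<Rightarrow> (nat \<Rightarrow> nat \<Rightarrow> 'b :: comm_ring_1) \<Rightarrow> 'b mat" where
  "quotient_matrix vs cell K f = mat K K
     (\<lambda>(c,d). f c d * (of_nat (card {v \<in> set vs. cell v = d}) - (if c = d then 1 else 0)))"

lemma sum_nth_distinct:
  assumes "distinct vs"
  shows "(\<Sum>i<length vs. g (vs ! i)) = (\<Sum>v\<in>set vs. g v)"
  using assms by (simp add: sum.distinct_set_conv_list sum_list_sum_nth atLeast0LessThan)

lemma sum_indicator_mult:
  assumes "finite A"
  shows "(\<Sum>v\<in>A. (if v = a then 1 else 0) * (h v :: 'b :: semiring_1)) = (if a \<in> A then h a else 0)"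
  using assms by (simp add: if_distrib[of "\<lambda>x. x * _"] sum.delta' cong: if_cong)

lemma char_poly_four_block_mat_lower_zero:
  fixes A :: "'a :: idom mat"
  assumes A: "A \<in> carrier_mat n n" and B: "B \<in> carrier_mat n m" and D: "D \<in> carrier_mat m m"
  shows "char_poly (four_block_mat A B (0\<^sub>m m n) D) = char_poly A * char_poly D"
proof -
  have "char_poly_matrix (four_block_mat A B (0\<^sub>m m n) D) =
        four_block_mat (char_poly_matrix A) (map_mat (\<lambda>a. [:-a:]) B) (0\<^sub>m m n) (char_poly_matrix D)"
    using A B D by (intro eq_matI) (auto simp: char_poly_matrix_def)
  then show ?thesis
    unfolding char_poly_def using A B D by (auto intro!: det_four_block_mat_lower_left_zero)
qed

locale class_enumeration =
  fixes vs :: "'a list" and cell :: "'a \<Rightarrow> nat" and K :: nat and ws :: "nat \<Rightarrow> 'a"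
  assumes distinct_vs: "distinct vs"
    and cell_less: "\<And>v. v \<in> set vs \<Longrightarrow> cell v < K"
    and bij_ws: "bij_betw ws {..<length vs} (set vs)"
    and cell_ws: "\<And>c. c < K \<Longrightarrow> cell (ws c) = c"
    and K_le_length: "K \<le> length vs"
begin

abbreviation "N \<equiv> length vs"

lemma ws_in_set: "c < N \<Longrightarrow> ws c \<in> set vs"
  using bij_ws by (auto dest: bij_betwE)

lemma ws_eq_iff: "c < N \<Longrightarrow> d < N \<Longrightarrow> ws c = ws d \<longleftrightarrow> c = d"
  using bij_ws by (auto simp: bij_betw_def dest: inj_onD)

lemma cell_ws_less: "c < N \<Longrightarrow> cell (ws c) < K"
  using cell_less ws_in_set by blast

text \<open>In the basis formed by the indicator vectors of the classes (columns d < K) and the unit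
  vectors of the vertices that are not class representatives (columns d \<ge> K), the class matrix
  becomes block upper triangular, with the quotient matrix and a diagonal matrix as diagonal blocks.\<close>
definition class_coord :: "'a \<Rightarrow> nat \<Rightarrow> 'b :: comm_ring_1" where
  "class_coord v d = (if d < K then (if cell v = d then 1 else 0) else if v = ws d then 1 else 0)"

definition class_basis :: "'b :: comm_ring_1 mat" where
  "class_basis = mat N N (\<lambda>(i,d). class_coord (vs ! i) d)"

definition class_basis_inv :: "'b :: comm_ring_1 mat" where
  "class_basis_inv = mat N N (\<lambda>(c,i).
     (if vs ! i = ws c then 1 else 0) - (if K \<le> c \<and> vs ! i = ws (cell (ws c)) then 1 else 0))"

definition class_block_form :: "(nat \<Rightarrow> nat \<Rightarrow> 'b :: comm_ring_1) \<Rightarrow> 'b mat" where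
  "class_block_form f = mat N N (\<lambda>(c,d).
     if d < K then (if c < K then quotient_matrix vs cell K f $$ (c,d) else 0)
     else if c < K then f c (cell (ws d))
     else if c = d then - f (cell (ws d)) (cell (ws d)) else 0)"

lemma class_basis_inv_mult: "class_basis_inv * class_basis = (1\<^sub>m N :: 'b :: comm_ring_1 mat)"
proof (rule eq_matI)
  fix c d assume "c < dim_row (1\<^sub>m N :: 'b mat)" "d < dim_col (1\<^sub>m N :: 'b mat)"
  then have c: "c < N" and d: "d < N" by auto
  have rep: "cell (ws c) < K" "ws (cell (ws c)) \<in> set vs"
    using cell_ws_less[OF c] ws_in_set K_le_length by auto
  have "(class_basis_inv * class_basis) $$ (c,d) = (\<Sum>v\<in>set vs.
      ((if v = ws c then 1 else 0) - (if K \<le> c \<and> v = ws (cell (ws c)) then 1 else 0)) * class_coord v d)"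
    using c d sum_nth_distinct[OF distinct_vs]
    by (simp add: class_basis_inv_def class_basis_def scalar_prod_def atLeast0LessThan)
  also have "\<dots> = class_coord (ws c) d - (if K \<le> c then class_coord (ws (cell (ws c))) d else 0)"
    using rep ws_in_set[OF c] by (simp add: left_diff_distrib sum_subtractf sum_indicator_mult)
  also have "\<dots> = (1\<^sub>m N :: 'b mat) $$ (c,d)"
    using c d rep cell_ws ws_eq_iff[of "cell (ws c)" d] ws_eq_iff[OF c d] K_le_length
    by (auto simp: class_coord_def)
  finally show "(class_basis_inv * class_basis) $$ (c,d) = (1\<^sub>m N :: 'b mat) $$ (c,d)" .
qed (auto simp: class_basis_inv_def class_basis_def)

lemma class_matrix_mult_class_basis_entry:
  fixes f :: "nat \<Rightarrow> nat \<Rightarrow> 'b :: comm_ring_1"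
  assumes i: "i < N" and d: "d < N"
  shows "(class_matrix vs cell f * class_basis) $$ (i,d) = (if d < K
    then f (cell (vs ! i)) d * (of_nat (card {v \<in> set vs. cell v = d}) - (if cell (vs ! i) = d then 1 else 0))
    else if vs ! i = ws d then 0 else f (cell (vs ! i)) (cell (ws d)))"
proof -
  define u where "u = vs ! i"
  have u: "u \<in> set vs" using i by (simp add: u_def)
  have "(class_matrix vs cell f * class_basis) $$ (i,d) =
      (\<Sum>k<N. (if vs ! k = u then 0 else f (cell u) (cell (vs ! k))) * class_coord (vs ! k) d)"
    using i d distinct_vs
    by (auto simp: class_matrix_def class_basis_def scalar_prod_def atLeast0LessThan u_def
        nth_eq_iff_index_eq intro!: sum.cong)
  also have "\<dots> = (\<Sum>v\<in>set vs. (if v = u then 0 else f (cell u) (cell v)) * class_coord v d)"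
    by (rule sum_nth_distinct[OF distinct_vs])
  also have "\<dots> = (if d < K
      then f (cell u) d * (of_nat (card {v \<in> set vs. cell v = d}) - (if cell u = d then 1 else 0))
      else if u = ws d then 0 else f (cell u) (cell (ws d)))"
  proof (cases "d < K")
    case True
    have "(\<Sum>v\<in>set vs. (if v = u then 0 else f (cell u) (cell v)) * class_coord v d) =
        (\<Sum>v\<in>{v \<in> set vs. cell v = d} - {u}. f (cell u) d)"
      using True by (intro sum.mono_neutral_cong_right) (auto simp: class_coord_def)
    moreover have "cell u = d \<Longrightarrow> card {v \<in> set vs. cell v = d} > 0" using u by (auto simp: card_gt_0_iff)
    ultimately show ?thesis using True u by (auto simp: card_Diff_singleton_if of_nat_diff)
  next
    case False
    have "(\<Sum>v\<in>set vs. (if v = u then 0 else f (cell u) (cell v)) * class_coord v d) =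
        (\<Sum>v\<in>set vs. (if v = ws d then 1 else 0) * (if v = u then 0 else f (cell u) (cell v)))"
      using False by (intro sum.cong) (auto simp: class_coord_def)
    then show ?thesis using False ws_in_set[OF d] by (auto simp: sum_indicator_mult)
  qed
  finally show ?thesis unfolding u_def .
qed

lemma class_basis_mult_block_form_entry:
  fixes f :: "nat \<Rightarrow> nat \<Rightarrow> 'b :: comm_ring_1"
  assumes i: "i < N" and d: "d < N"
  shows "(class_basis * class_block_form f) $$ (i,d) = class_block_form f $$ (cell (vs ! i), d)
    + (if K \<le> d \<and> vs ! i = ws d then - f (cell (ws d)) (cell (ws d)) else 0)"
proof -
  define u where "u = vs ! i"
  have u: "cell u < K" using i cell_less by (simp add: u_def)
  let ?T = "class_block_form f"
  have "(class_basis * ?T) $$ (i,d) = (\<Sum>c<N. class_coord u c * ?T $$ (c,d))"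
    using i d unfolding u_def
    by (simp add: class_basis_def class_block_form_def scalar_prod_def atLeast0LessThan)
  also have "\<dots> = (\<Sum>c<K. class_coord u c * ?T $$ (c,d)) + (\<Sum>c\<in>{K..<N}. class_coord u c * ?T $$ (c,d))"
    unfolding atLeast0LessThan[symmetric]
    by (rule sum.atLeastLessThan_concat[symmetric]) (use K_le_length in auto)
  also have "(\<Sum>c<K. class_coord u c * ?T $$ (c,d)) = ?T $$ (cell u, d)"
    using u by (simp add: class_coord_def eq_commute[of "cell u"] sum_indicator_mult)
  also have "(\<Sum>c\<in>{K..<N}. class_coord u c * ?T $$ (c,d)) = (\<Sum>c\<in>{K..<N}.
      if c = d then (if K \<le> d \<and> u = ws d then - f (cell (ws d)) (cell (ws d)) else 0) else 0)"
    using d by (intro sum.cong) (auto simp: class_coord_def class_block_form_def)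
  finally show ?thesis using d unfolding u_def by simp
qed

lemma class_matrix_mult_class_basis:
  fixes f :: "nat \<Rightarrow> nat \<Rightarrow> 'b :: comm_ring_1"
  shows "class_matrix vs cell f * class_basis = class_basis * class_block_form f"
proof (rule eq_matI)
  fix i d assume "i < dim_row (class_basis * class_block_form f :: 'b mat)"
    "d < dim_col (class_basis * class_block_form f :: 'b mat)"
  then have i: "i < N" and d: "d < N" by (auto simp: class_basis_def class_block_form_def)
  have "cell (vs ! i) < K" "vs ! i \<in> set vs" using i cell_less by auto
  then show "(class_matrix vs cell f * class_basis) $$ (i,d) = (class_basis * class_block_form f) $$ (i,d)"
    unfolding class_matrix_mult_class_basis_entry[OF i d] class_basis_mult_block_form_entry[OF i d]
    using d K_le_length by (auto simp: class_block_form_def quotient_matrix_def)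
qed (auto simp: class_matrix_def class_basis_def class_block_form_def)

lemma char_poly_class_block_form:
  fixes f :: "nat \<Rightarrow> nat \<Rightarrow> 'b :: idom"
  shows "char_poly (class_block_form f) = char_poly (quotient_matrix vs cell K f)
     * (\<Prod>c\<leftarrow>[K..<N]. [: f (cell (ws c)) (cell (ws c)), 1 :])"
proof -
  define B where "B = mat K (N - K) (\<lambda>(c,d). f c (cell (ws (d + K))))"
  define D where "D = mat (N - K) (N - K)
    (\<lambda>(c,d). if c = d then - f (cell (ws (d + K))) (cell (ws (d + K))) else 0)"
  have "class_block_form f = four_block_mat (quotient_matrix vs cell K f) B (0\<^sub>m (N - K) K) D"
    using K_le_length by (intro eq_matI) (auto simp: class_block_form_def quotient_matrix_def B_def D_def)
  then have "char_poly (class_block_form f) = char_poly (quotient_matrix vs cell K f) * char_poly D"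
    by (simp add: char_poly_four_block_mat_lower_zero quotient_matrix_def B_def D_def)
  also have "char_poly D = (\<Prod>a\<leftarrow>diag_mat D. [:- a, 1:])"
    by (rule char_poly_upper_triangular) (auto simp: D_def upper_triangular_def)
  also have "diag_mat D = map (\<lambda>c. - f (cell (ws c)) (cell (ws c))) [K..<N]"
    using K_le_length by (intro nth_equalityI) (auto simp: diag_mat_def D_def add.commute)
  finally show ?thesis by (simp add: o_def)
qed

lemma char_poly_class_matrix_eq_block_form:
  fixes f :: "nat \<Rightarrow> nat \<Rightarrow> 'b :: field"
  shows "char_poly (class_matrix vs cell f) = char_poly (class_block_form f)"
proof (rule char_poly_similar)
  have P: "(class_basis :: 'b mat) \<in> carrier_mat N N"
    and P': "(class_basis_inv :: 'b mat) \<in> carrier_mat N N"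
    by (auto simp: class_basis_def class_basis_inv_def)
  have inv: "class_basis_inv * class_basis = (1\<^sub>m N :: 'b mat)"
    by (rule class_basis_inv_mult)
  have inv': "class_basis * class_basis_inv = (1\<^sub>m N :: 'b mat)"
    using mat_mult_left_right_inverse[OF P' P inv] .
  have S: "class_matrix vs cell f \<in> carrier_mat N N" by (simp add: class_matrix_def)
  have "class_matrix vs cell f = class_matrix vs cell f * (class_basis * class_basis_inv)"
    using S by (simp add: inv')
  also have "\<dots> = class_basis * class_block_form f * class_basis_inv"
    using S P P' by (simp add: assoc_mult_mat[symmetric] class_matrix_mult_class_basis)
  finally have "class_matrix vs cell f = class_basis * class_block_form f * class_basis_inv" .
  then show "similar_mat (class_matrix vs cell f) (class_block_form f)"
    using S P P' by (intro similar_matI[OF _ inv' inv]) (auto simp: class_block_form_def)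
qed

lemma prod_nonrepresentatives:
  fixes g :: "nat \<Rightarrow> 'b :: comm_monoid_mult"
  shows "(\<Prod>c\<leftarrow>[K..<N]. g (cell (ws c))) = (\<Prod>d<K. g d ^ (card {v \<in> set vs. cell v = d} - 1))"
proof -
  let ?R = "set vs - ws ` {..<K}"
  have image: "ws ` {K..<N} = ?R"
  proof -
    have "ws ` {..<N} = ws ` {..<K} \<union> ws ` {K..<N}" using K_le_length by (auto simp flip: image_Un)
    moreover have "ws ` {..<K} \<inter> ws ` {K..<N} = {}" using ws_eq_iff K_le_length by fastforce
    ultimately show ?thesis using bij_ws by (auto simp: bij_betw_def)
  qed
  have fiber: "{v \<in> ?R. cell v = d} = {v \<in> set vs. cell v = d} - {ws d}" if "d < K" for d
    using that cell_ws by auto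
  have "(\<Prod>c\<leftarrow>[K..<N]. g (cell (ws c))) = (\<Prod>c\<in>{K..<N}. g (cell (ws c)))"
    using prod.distinct_set_conv_list[of "[K..<N]" "\<lambda>c. g (cell (ws c))"] by simp
  also have "\<dots> = (\<Prod>v\<in>?R. g (cell v))"
    using ws_eq_iff by (subst image[symmetric], subst prod.reindex) (auto simp: inj_on_def)
  also have "\<dots> = (\<Prod>d<K. \<Prod>v\<in>{v \<in> ?R. cell v = d}. g (cell v))"
    using cell_less by (intro prod.group[symmetric]) auto
  also have "\<dots> = (\<Prod>d<K. g d ^ (card {v \<in> set vs. cell v = d} - 1))"
    using fiber ws_in_set K_le_length cell_ws by (intro prod.cong) auto
  finally show ?thesis .
qed

lemma char_poly_class_matrix_enumerated:
  fixes f :: "nat \<Rightarrow> nat \<Rightarrow> 'b :: field"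
  shows "char_poly (class_matrix vs cell f) = char_poly (quotient_matrix vs cell K f)
     * (\<Prod>d<K. [: f d d, 1 :] ^ (card {v \<in> set vs. cell v = d} - 1))"
  using char_poly_class_matrix_eq_block_form[of f] char_poly_class_block_form[of f]
    prod_nonrepresentatives[of "\<lambda>d. [: f d d, 1 :]"] by simp

end

lemma ex_class_enumeration:
  assumes "distinct vs" and "\<And>v. v \<in> set vs \<Longrightarrow> cell v < K"
    and "\<And>d. d < K \<Longrightarrow> \<exists>v \<in> set vs. cell v = d"
  shows "\<exists>ws. class_enumeration vs cell K ws"
proof -
  obtain rep where rep: "\<And>d. d < K \<Longrightarrow> rep d \<in> set vs \<and> cell (rep d) = d"
    using assms(3) by metis
  have inj_rep: "inj_on rep {..<K}" using rep by (metis inj_onI lessThan_iff)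
  let ?R = "set vs - rep ` {..<K}"
  have card_reps: "card (rep ` {..<K}) = K" using card_image[OF inj_rep] by simp
  have sub: "rep ` {..<K} \<subseteq> set vs" using rep by auto
  then have K_le: "K \<le> length vs"
    using card_mono[OF _ sub] card_reps distinct_card[OF assms(1)] by simp
  have "card ?R = length vs - K"
    using card_Diff_subset[OF _ sub] card_reps distinct_card[OF assms(1)] by simp
  then obtain e where e: "bij_betw e {0..<length vs - K} ?R"
    by (metis ex_bij_betw_nat_finite finite_Diff finite_set)
  define ws where "ws c = (if c < K then rep c else e (c - K))" for c
  have "bij_betw ws {..<length vs} (set vs)"
  proof -
    have "bij_betw ws {..<K} (rep ` {..<K})"
      using inj_rep by (auto simp: bij_betw_def ws_def inj_on_def)
    moreover have "bij_betw ws {K..<length vs} ?R"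
    proof -
      have "bij_betw (\<lambda>c. c - K) {K..<length vs} {0..<length vs - K}"
        by (rule bij_betwI[where g = "\<lambda>c. c + K"]) auto
      from bij_betw_trans[OF this e] show ?thesis
        by (rule bij_betw_cong[THEN iffD1, rotated]) (simp add: ws_def)
    qed
    ultimately have "bij_betw ws ({..<K} \<union> {K..<length vs}) (rep ` {..<K} \<union> ?R)"
      by (rule bij_betw_combine) blast
    moreover have "{..<K} \<union> {K..<length vs} = {..<length vs}" using K_le by auto
    moreover have "rep ` {..<K} \<union> ?R = set vs" using sub by auto
    ultimately show ?thesis by simp
  qed
  then show ?thesis
    using assms K_le rep by (auto simp: class_enumeration_def ws_def)
qed

theorem char_poly_class_matrix:
  fixes f :: "nat \<Rightarrow> nat \<Rightarrow> 'b :: field"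
  assumes "distinct vs" and "\<And>v. v \<in> set vs \<Longrightarrow> cell v < K"
    and "\<And>d. d < K \<Longrightarrow> \<exists>v \<in> set vs. cell v = d"
  shows "char_poly (class_matrix vs cell f) = char_poly (quotient_matrix vs cell K f)
     * (\<Prod>d<K. [: f d d, 1 :] ^ (card {v \<in> set vs. cell v = d} - 1))"
proof -
  obtain ws where "class_enumeration vs cell K ws" using ex_class_enumeration[OF assms] by blast
  then show ?thesis by (rule class_enumeration.char_poly_class_matrix_enumerated)
qed

lemma map_mat_of_real_class_matrix:
  "map_mat of_real (class_matrix vs cell f) = class_matrix vs cell (\<lambda>c d. of_real (f c d))"
  by (intro eq_matI) (auto simp: class_matrix_def)

lemma map_mat_of_real_quotient_matrix:
  "map_mat of_real (quotient_matrix vs cell K f) = quotient_matrix vs cell K (\<lambda>c d. of_real (f c d))"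
  by (intro eq_matI) (auto simp: quotient_matrix_def)

theorem spectrum_mset_class_matrix:
  fixes f :: "nat \<Rightarrow> nat \<Rightarrow> real"
  assumes "distinct vs" and "\<And>v. v \<in> set vs \<Longrightarrow> cell v < K"
    and "\<And>d. d < K \<Longrightarrow> \<exists>v \<in> set vs. cell v = d"
  shows "spectrum_mset (class_matrix vs cell f) = spectrum_mset (quotient_matrix vs cell K f)
     + (\<Sum>d<K. replicate_mset (card {v \<in> set vs. cell v = d} - 1) (complex_of_real (- f d d)))"
proof -
  let ?f = "\<lambda>c d. complex_of_real (f c d)"
  let ?Q = "quotient_matrix vs cell K ?f"
  let ?m = "\<lambda>d. card {v \<in> set vs. cell v = d} - 1"
  have "char_poly ?Q \<noteq> 0"
    using degree_monic_char_poly[of ?Q K] by (auto simp: quotient_matrix_def)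
  moreover have "(\<Prod>d<K. [: ?f d d, 1 :] ^ ?m d) \<noteq> 0" by simp
  ultimately have roots: "proots (char_poly ?Q * (\<Prod>d<K. [: ?f d d, 1 :] ^ ?m d))
      = proots (char_poly ?Q) + (\<Sum>d<K. replicate_mset (?m d) (- ?f d d))"
    by (simp add: proots_mult proots_prod proots_power)
  have "char_poly (class_matrix vs cell ?f) = char_poly ?Q * (\<Prod>d<K. [: ?f d d, 1 :] ^ ?m d)"
    by (rule char_poly_class_matrix[OF assms])
  with roots show ?thesis
    unfolding spectrum_mset_def map_mat_of_real_class_matrix map_mat_of_real_quotient_matrix
    by simp
qed


section \<open>Graphs whose adjacency depends only on classes\<close>

lemma graph_deg_class_adjacency:
  fixes cell :: "'a \<Rightarrow> nat"
  assumes "finite V" and "u \<in> V" and "\<And>v. v \<in> V \<Longrightarrow> cell v < K"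
    and "\<And>v. v \<in> V \<Longrightarrow> E u v \<longleftrightarrow> v \<noteq> u \<and> R (cell v)"
  shows "graph_deg V E u =
    (\<Sum>d<K. if R d then card {v \<in> V. cell v = d} - (if cell u = d then 1 else 0) else 0)"
proof -
  let ?S = "{v \<in> V. v \<noteq> u \<and> R (cell v)}"
  have "graph_deg V E u = card ?S"
  proof -
    have "{v \<in> V. E u v} = ?S" using assms(4) by auto
    then show ?thesis by (simp add: graph_deg_def)
  qed
  also have "\<dots> = (\<Sum>d<K. card {v \<in> ?S. cell v = d})"
  proof -
    have "finite ?S" "cell ` ?S \<subseteq> {..<K}" using assms(1,3) by auto
    from sum.group[OF this(1) finite_lessThan[of K] this(2), of "\<lambda>_. 1 :: nat"]
    show ?thesis by simp
  qed
  also have "\<dots> = (\<Sum>d<K. if R d then card {v \<in> V. cell v = d} - (if cell u = d then 1 else 0) else 0)"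
  proof (rule sum.cong)
    fix d
    show "card {v \<in> ?S. cell v = d} =
        (if R d then card {v \<in> V. cell v = d} - (if cell u = d then 1 else 0) else 0)"
    proof (cases "R d")
      case True
      then have "{v \<in> ?S. cell v = d} = {v \<in> V. cell v = d} - {u}" by auto
      then show ?thesis using True assms(1,2) by (simp add: card_Diff_singleton_if)
    qed (auto simp: card_eq_0_iff)
  qed simp
  finally show ?thesis .
qed

lemma sombor_matrix_eq_class_matrix:
  assumes "distinct vs"
    and "\<And>u v. u \<in> set vs \<Longrightarrow> v \<in> set vs \<Longrightarrow> E u v \<longleftrightarrow> u \<noteq> v \<and> R (cell u) (cell v)"
    and "\<And>u. u \<in> set vs \<Longrightarrow> graph_deg (set vs) E u = D (cell u)"
  shows "sombor_matrix vs E =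
    class_matrix vs cell (\<lambda>c d. if R c d then sqrt (real (D c)^2 + real (D d)^2) else 0)"
    (is "_ = ?C")
proof (rule eq_matI)
  fix i j assume "i < dim_row ?C" "j < dim_col ?C"
  then have i: "vs ! i \<in> set vs" "i < length vs" and j: "vs ! j \<in> set vs" "j < length vs"
    by (auto simp: class_matrix_def)
  have "vs ! i = vs ! j \<longleftrightarrow> i = j" using assms(1) i(2) j(2) by (simp add: nth_eq_iff_index_eq)
  then show "sombor_matrix vs E $$ (i,j) = ?C $$ (i,j)"
    using i j assms(2)[OF i(1) j(1)] assms(3)[OF i(1)] assms(3)[OF j(1)]
    by (simp add: sombor_matrix_def class_matrix_def)
qed (simp_all add: sombor_matrix_def class_matrix_def)

section \<open>The semidihedral group\<close>

lemma SD_carrier: "carrier (SD n) = {0..<4*n} \<times> {0..<2}"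
  by (simp add: SD_def)

lemma SD_one: "\<one>\<^bsub>SD n\<^esub> = (0, 0)"
  by (simp add: SD_def)

lemma SD_mult: "(i, j) \<otimes>\<^bsub>SD n\<^esub> (k, l) = ((i + k * (2*n - 1)^j) mod (4*n), (j + l) mod 2)"
  by (simp add: SD_def)

lemma pow_mod_eq_pow_parity_mod:
  fixes m :: nat
  assumes "m^2 mod N = 1"
  shows "m^k mod N = m^(k mod 2) mod N"
proof -
  have "m^k = m^(k mod 2) * (m^2)^(k div 2)"
    by (metis power_add power_mult mod_div_decomp add.commute mult.commute)
  also have "\<dots> mod N = m^(k mod 2) * ((m^2 mod N)^(k div 2) mod N) mod N"
    by (simp add: mod_mult_right_eq power_mod)
  finally show ?thesis using assms by simp
qed

lemma half_mod_double_less: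
  fixes n :: nat
  assumes "0 < n"
  shows "i mod (2*n) div 2 < n"
proof (rule less_mult_imp_div_less)
  have "i mod (2*n) < 2*n" using assms by simp
  then show "i mod (2*n) < n * 2" by linarith
qed

lemma odd_mod_double_iff: "odd (i mod (2*n)) \<longleftrightarrow> odd (i::nat)"
  by (simp add: odd_iff_mod_2_eq_one mod_mod_cancel)

lemma mod_double_if: "x < 4*n \<Longrightarrow> x mod (2*n) = (if x < 2*n then x else x - (2*n::nat))"
  by (simp add: le_mod_geq)

lemma add_half_mod_if: "x < 4*n \<Longrightarrow> (x + 2*n) mod (4*n) = (if x < 2*n then x + 2*n else x - (2*n::nat))"
  by (simp add: le_mod_geq)

lemma SD_twist_square_mod:
  fixes n :: nat
  assumes "1 \<le> n"
  shows "(2*n - 1)^2 mod (4*n) = 1"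
proof -
  obtain k where k: "n = Suc k" using assms by (cases n) auto
  have sq: "(2*n - 1)^2 = 1 + k * (4*n)" unfolding k by (simp add: power2_eq_square algebra_simps)
  show ?thesis by (simp only: sq mod_mult_self1) (use assms in simp)
qed

lemma SD_mult_assoc:
  assumes n: "1 \<le> n"
  shows "((a, j) \<otimes>\<^bsub>SD n\<^esub> (b, l)) \<otimes>\<^bsub>SD n\<^esub> (c, p) = (a, j) \<otimes>\<^bsub>SD n\<^esub> ((b, l) \<otimes>\<^bsub>SD n\<^esub> (c, p))"
proof -
  let ?m = "2*n - 1" and ?N = "4*n"
  have twist: "c * ?m^((j + l) mod 2) mod ?N = c * ?m^l * ?m^j mod ?N"
  proof -
    have "c * ?m^((j + l) mod 2) mod ?N = c * (?m^((j + l) mod 2) mod ?N) mod ?N"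
      by (simp add: mod_mult_right_eq)
    also have "\<dots> = c * (?m^(j + l) mod ?N) mod ?N"
      using pow_mod_eq_pow_parity_mod[OF SD_twist_square_mod[OF n]] by simp
    finally show ?thesis by (simp add: mod_mult_right_eq power_add mult_ac)
  qed
  have "((a + b * ?m^j) mod ?N + c * ?m^((j + l) mod 2)) mod ?N
      = (a + b * ?m^j + c * ?m^((j + l) mod 2) mod ?N) mod ?N"
    by (simp add: mod_add_left_eq mod_add_right_eq)
  also have "\<dots> = (a + b * ?m^j + c * ?m^l * ?m^j) mod ?N"
    unfolding twist by (rule mod_add_right_eq)
  also have "\<dots> = (a + (b + c * ?m^l) * ?m^j) mod ?N"
    by (simp add: algebra_simps)
  also have "\<dots> = (a + ((b + c * ?m^l) mod ?N) * ?m^j) mod ?N"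
    by (metis mod_add_right_eq mod_mult_left_eq)
  finally have "((a + b * ?m^j) mod ?N + c * ?m^((j + l) mod 2)) mod ?N
      = (a + ((b + c * ?m^l) mod ?N) * ?m^j) mod ?N" .
  moreover have "((j + l) mod 2 + p) mod 2 = (j + (l + p) mod 2) mod 2" by presburger
  ultimately show ?thesis by (simp add: SD_mult)
qed

lemma SD_group: "1 \<le> n \<Longrightarrow> group (SD n)"
proof (rule groupI)
  assume n: "1 \<le> n"
  show "x \<otimes>\<^bsub>SD n\<^esub> y \<in> carrier (SD n)" if "x \<in> carrier (SD n)" "y \<in> carrier (SD n)" for x y
    using that n by (cases x; cases y) (auto simp: SD_mult SD_carrier)
  show "\<one>\<^bsub>SD n\<^esub> \<in> carrier (SD n)" using n by (simp add: SD_one SD_carrier)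
  show "\<one>\<^bsub>SD n\<^esub> \<otimes>\<^bsub>SD n\<^esub> x = x" if "x \<in> carrier (SD n)" for x
    using that by (cases x) (auto simp: SD_mult SD_one SD_carrier)
  show "(x \<otimes>\<^bsub>SD n\<^esub> y) \<otimes>\<^bsub>SD n\<^esub> z = x \<otimes>\<^bsub>SD n\<^esub> (y \<otimes>\<^bsub>SD n\<^esub> z)" for x y z
    using SD_mult_assoc[OF n] by (cases x; cases y; cases z) simp
  show "\<exists>y \<in> carrier (SD n). y \<otimes>\<^bsub>SD n\<^esub> x = \<one>\<^bsub>SD n\<^esub>" if x: "x \<in> carrier (SD n)" for x
  proof -
    obtain a j where x: "x = (a, j)" "j < 2" using x by (cases x) (auto simp: SD_carrier)
    define r where "r = a * (2*n - 1)^j mod (4*n)"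
    have "((4*n - r) mod (4*n) + a * (2*n - 1)^j) mod (4*n) = (4*n - r + r) mod (4*n)"
      unfolding r_def by (metis mod_add_left_eq mod_add_right_eq)
    also have "\<dots> = 0" using n by (simp add: r_def)
    finally have "((4*n - r) mod (4*n), j) \<otimes>\<^bsub>SD n\<^esub> x = \<one>\<^bsub>SD n\<^esub>"
      using x by (auto simp: SD_mult SD_one)
    moreover have "((4*n - r) mod (4*n), j) \<in> carrier (SD n)" using n x by (simp add: SD_carrier)
    ultimately show ?thesis by blast
  qed
qed

lemma (in group) generate_eq_pow_image:
  assumes "finite (carrier G)" and x: "x \<in> carrier G" and "x [^] m = \<one>" and "0 < m"
  shows "generate G {x} = (\<lambda>k::nat. x [^] k) ` {..<m}"
proof -
  have "x [^] k \<in> (\<lambda>k::nat. x [^] k) ` {..<m}" for k :: nat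
  proof -
    have "x [^] k = (x [^] m) [^] (k div m) \<otimes> x [^] (k mod m)"
      using x by (simp add: nat_pow_pow nat_pow_mult)
    then have "x [^] k = x [^] (k mod m)" using x assms(3) by simp
    then show ?thesis using assms(4) by (intro image_eqI[of _ _ "k mod m"]) auto
  qed
  then show ?thesis
    using generate_pow_on_finite_carrier[OF assms(1) x] by auto
qed

lemma SD_rotation_pow: "(i, 0) [^]\<^bsub>SD n\<^esub> (k::nat) = (k * i mod (4*n), 0)"
  by (induction k) (simp_all add: SD_one SD_mult mod_add_left_eq mod_add_right_eq add.commute)

lemma SD_reflection_pow_one: "i < 4*n \<Longrightarrow> (i, 1) [^]\<^bsub>SD n\<^esub> (1::nat) = (i, 1)"
  by (simp add: SD_one SD_mult)

lemma SD_reflection_pow_two: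
  assumes "1 \<le> n"
  shows "(i, 1) [^]\<^bsub>SD n\<^esub> (2::nat) = (2*n * (i mod 2), 0)"
proof -
  have "(i, 1) [^]\<^bsub>SD n\<^esub> Suc (Suc 0) = ((i + i * (2*n - 1)) mod (4*n), 0)"
    by (simp add: SD_one SD_mult mod_add_left_eq)
  also have "i + i * (2*n - 1) = 2*n * i" using assms by (simp add: algebra_simps)
  also have "4*n = 2*n * 2" by simp
  also have "2*n * i mod (2*n * 2) = 2*n * (i mod 2)" by (rule mod_mult_mult1)
  finally show ?thesis by (simp add: numeral_2_eq_2)
qed

lemma generate_SD_rotation:
  assumes "1 \<le> n" and "i < 4*n"
  shows "generate (SD n) {(i, 0)} = {(k * i mod (4*n), 0) | k. True}"
proof -
  interpret group "SD n" by (rule SD_group[OF assms(1)])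
  show ?thesis
    using generate_pow_on_finite_carrier[of "(i, 0)"] assms
    by (simp add: SD_carrier SD_rotation_pow)
qed

lemma generate_SD_reflection_odd:
  assumes n: "1 \<le> n" and i: "i < 4*n" and "odd i"
  shows "generate (SD n) {(i, 1)} = {(0, 0), (i, 1), (2*n, 0), ((i + 2*n) mod (4*n), 1)}"
proof -
  interpret group "SD n" by (rule SD_group[OF n])
  let ?z = "(i, 1) :: nat \<times> nat"
  have z: "?z \<in> carrier (SD n)" using i by (simp add: SD_carrier)
  have z1: "?z [^]\<^bsub>SD n\<^esub> (1::nat) = ?z" and z2: "?z [^]\<^bsub>SD n\<^esub> (2::nat) = (2*n, 0)"
    using SD_reflection_pow_one[OF i] SD_reflection_pow_two[OF n] \<open>odd i\<close>
    by (simp_all add: odd_iff_mod_2_eq_one)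
  have "?z [^]\<^bsub>SD n\<^esub> (3::nat) = ?z [^]\<^bsub>SD n\<^esub> (2 + 1 :: nat)" by simp
  also have "\<dots> = ?z [^]\<^bsub>SD n\<^esub> (2::nat) \<otimes>\<^bsub>SD n\<^esub> ?z [^]\<^bsub>SD n\<^esub> (1::nat)"
    by (rule nat_pow_mult[OF z, symmetric])
  finally have z3: "?z [^]\<^bsub>SD n\<^esub> (3::nat) = ((i + 2*n) mod (4*n), 1)"
    using z1 z2 by (simp add: SD_mult add.commute)
  have "?z [^]\<^bsub>SD n\<^esub> (4::nat) = ?z [^]\<^bsub>SD n\<^esub> (2::nat) \<otimes>\<^bsub>SD n\<^esub> ?z [^]\<^bsub>SD n\<^esub> (2::nat)"
    using z by (simp add: nat_pow_mult)
  also have "\<dots> = \<one>\<^bsub>SD n\<^esub>" using z2 by (simp add: SD_mult SD_one)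
  finally have "generate (SD n) {?z} = (\<lambda>k::nat. ?z [^]\<^bsub>SD n\<^esub> k) ` {..<4}"
    using generate_eq_pow_image[OF _ z, of 4] by (simp add: SD_carrier)
  also have "{..<4::nat} = {0, 1, 2, 3}" by auto
  finally show ?thesis by (simp only: image_insert image_empty z1 z2 z3 nat_pow_0 SD_one)
qed

lemma generate_SD_reflection_even:
  assumes n: "1 \<le> n" and i: "i < 4*n" and "even i"
  shows "generate (SD n) {(i, 1)} = {(0, 0), (i, 1)}"
proof -
  interpret group "SD n" by (rule SD_group[OF n])
  have z: "(i, 1) \<in> carrier (SD n)" using i by (simp add: SD_carrier)
  have "(i, 1) [^]\<^bsub>SD n\<^esub> (2::nat) = \<one>\<^bsub>SD n\<^esub>"
    using SD_reflection_pow_two[OF n] \<open>even i\<close> by (simp add: SD_one)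
  then have "generate (SD n) {(i, 1)} = (\<lambda>k::nat. (i, 1) [^]\<^bsub>SD n\<^esub> k) ` {..<2}"
    using generate_eq_pow_image[OF _ z, of 2] by (simp add: SD_carrier)
  also have "{..<2::nat} = {0, 1}" by auto
  finally show ?thesis by (simp only: image_insert image_empty SD_reflection_pow_one[OF i] nat_pow_0 SD_one)
qed

section \<open>Twin classes of the enhanced power graph\<close>

text \<open>Class 0 is {e}, class 1 is {a^2n}, class 2 holds the other powers of a, class 3 + m (m < n)
  is {a^(2m+1) b, a^(2m+1+2n) b}, and class n + 3 holds the involutions a^(2s) b.\<close>
fun SD_class :: "nat \<Rightarrow> nat \<times> nat \<Rightarrow> nat" where
  "SD_class n (i, j) = (if j = 0 then (if i = 0 then 0 else if i = 2*n then 1 else 2)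
     else if odd i then 3 + i mod (2*n) div 2 else n + 3)"

declare SD_class.simps [simp del]

lemma SD_class_one [simp]: "SD_class n (0, 0) = 0"
  by (simp add: SD_class.simps)

lemma SD_class_central [simp]: "1 \<le> n \<Longrightarrow> SD_class n (2*n, 0) = 1"
  by (simp add: SD_class.simps)

lemma SD_class_rotation_le: "SD_class n (i, 0) \<le> 2"
  by (simp add: SD_class.simps)

lemma SD_class_reflection_ge: "3 \<le> SD_class n (i, 1)"
  by (simp add: SD_class.simps)

definition SD_class_adj :: "nat \<Rightarrow> nat \<Rightarrow> nat \<Rightarrow> bool" where
  "SD_class_adj n c d \<longleftrightarrow> c = 0 \<or> d = 0 \<or> (c \<le> n + 2 \<and> d \<le> n + 2 \<and> (c = 1 \<or> d = 1 \<or> c = d))"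

lemma SD_class_adj_sym: "SD_class_adj n c d \<longleftrightarrow> SD_class_adj n d c"
  by (auto simp: SD_class_adj_def)

lemma SD_class_less:
  assumes "v \<in> carrier (SD n)"
  shows "SD_class n v < n + 4"
proof -
  obtain i j where v: "v = (i, j)" "i < 4*n" using assms by (cases v) (auto simp: SD_carrier)
  then have "i mod (2*n) div 2 < n" by (intro half_mod_double_less) simp
  then show ?thesis using v by (simp add: SD_class.simps)
qed

lemma SD_class_reflection_le_iff:
  "i < 4*n \<Longrightarrow> SD_class n (i, 1) \<le> n + 2 \<longleftrightarrow> odd i"
  using half_mod_double_less[of n i] by (auto simp: SD_class.simps)

lemma SD_class_reflection_eq_iff:
  assumes "odd i" and "i < 4*n" and "i' < 4*n"
  shows "SD_class n (i', 1) = SD_class n (i, 1) \<longleftrightarrow> i' = i \<or> i' = (i + 2*n) mod (4*n)"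
proof -
  have "i mod (2*n) div 2 < n" using assms(2) by (intro half_mod_double_less) simp
  then have "SD_class n (i', 1) = SD_class n (i, 1) \<longleftrightarrow> odd i' \<and> i' mod (2*n) div 2 = i mod (2*n) div 2"
    using assms by (auto simp: SD_class.simps)
  also have "\<dots> \<longleftrightarrow> odd i' \<and> i' mod (2*n) = i mod (2*n)"
    using assms(1) odd_mod_double_iff[of i n] odd_mod_double_iff[of i' n]
    by (metis odd_two_times_div_two_succ)
  also have "\<dots> \<longleftrightarrow> i' = i \<or> i' = (i + 2*n) mod (4*n)"
    using assms by (auto simp: mod_double_if add_half_mod_if split: if_splits)
  finally show ?thesis .
qed

lemma SD_class_adj_if_common_cyclic:
  assumes n: "1 \<le> n" and z: "z \<in> carrier (SD n)"
    and u: "u \<in> generate (SD n) {z}" and v: "v \<in> generate (SD n) {z}" and "u \<noteq> v"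
  shows "SD_class_adj n (SD_class n u) (SD_class n v)"
proof -
  obtain i j where z: "z = (i, j)" "i < 4*n" "j < 2" using z by (cases z) (auto simp: SD_carrier)
  consider "j = 0" | "j = 1" "odd i" | "j = 1" "even i" using z by linarith
  then show ?thesis
  proof cases
    case 1
    then have "SD_class n u \<le> 2" "SD_class n v \<le> 2"
      using u v generate_SD_rotation[OF n z(2)] z by (auto simp: SD_class_rotation_le)
    then show ?thesis by (auto simp: SD_class_adj_def)
  next
    case 2
    let ?c = "SD_class n (i, 1)"
    have c: "?c \<le> n + 2" using SD_class_reflection_le_iff[OF z(2)] 2 by simp
    have "(i + 2*n) mod (4*n) < 4*n" using z(2) by simp
    then have c': "SD_class n ((i + 2*n) mod (4*n), 1) = ?c"
      using SD_class_reflection_eq_iff[OF 2(2) z(2)] by blast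
    have "u \<in> {(0, 0), (i, 1), (2*n, 0), ((i + 2*n) mod (4*n), 1)}"
      "v \<in> {(0, 0), (i, 1), (2*n, 0), ((i + 2*n) mod (4*n), 1)}"
      using u v generate_SD_reflection_odd[OF n z(2) 2(2)] z 2 by simp_all
    then have "SD_class n u \<in> {0, 1, ?c}" "SD_class n v \<in> {0, 1, ?c}"
      using c' n by auto
    then show ?thesis using c by (auto simp: SD_class_adj_def)
  next
    case 3
    then have "u = (0, 0) \<or> v = (0, 0)"
      using u v \<open>u \<noteq> v\<close> generate_SD_reflection_even[OF n z(2) 3(2)] z by auto
    then show ?thesis by (auto simp: SD_class_adj_def)
  qed
qed

lemma SD_rotation_mem_generate:
  assumes "1 \<le> n" and "x < 4*n"
  shows "(x, 0) \<in> generate (SD n) {(1, 0)}"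
proof -
  have "generate (SD n) {(1, 0)} = {(k * 1 mod (4*n), 0) | k. True}"
    by (rule generate_SD_rotation[OF assms(1)]) (use assms(1) in simp)
  moreover have "(x, 0) = (x * 1 mod (4*n), 0)" using assms(2) by simp
  ultimately show ?thesis by blast
qed

lemma SD_class_adj_rotation_reflection:
  assumes "a \<noteq> 0" and "c < 4*n" and "SD_class_adj n (SD_class n (a, 0)) (SD_class n (c, 1))"
  shows "a = 2*n" and "odd c"
proof -
  have "SD_class n (a, 0) \<noteq> 0" using assms(1) by (simp add: SD_class.simps)
  with assms(3) SD_class_rotation_le[of n a] SD_class_reflection_ge[of n c]
  have "SD_class n (a, 0) = 1" and "SD_class n (c, 1) \<le> n + 2" by (auto simp: SD_class_adj_def)
  from \<open>SD_class n (a, 0) = 1\<close> show "a = 2*n" by (simp add: SD_class.simps split: if_splits)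
  from \<open>SD_class n (c, 1) \<le> n + 2\<close> show "odd c" using SD_class_reflection_le_iff[OF assms(2)] by simp
qed

lemma SD_class_adj_reflections:
  assumes "a < 4*n" and "c < 4*n" and "c \<noteq> a"
    and "SD_class_adj n (SD_class n (a, 1)) (SD_class n (c, 1))"
  shows "odd a" and "c = (a + 2*n) mod (4*n)"
proof -
  from assms(4) SD_class_reflection_ge[of n a] SD_class_reflection_ge[of n c]
  have same: "SD_class n (c, 1) = SD_class n (a, 1)" and "SD_class n (a, 1) \<le> n + 2"
    by (auto simp: SD_class_adj_def)
  then show "odd a" using SD_class_reflection_le_iff[OF assms(1)] by simp
  then show "c = (a + 2*n) mod (4*n)"
    using SD_class_reflection_eq_iff[OF _ assms(1,2)] same assms(3) by blast
qed

lemma SD_common_cyclic_if_class_adj_ordered: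
  assumes n: "1 \<le> n" and u: "u \<in> carrier (SD n)" and v: "v \<in> carrier (SD n)" and "u \<noteq> v"
    and adj: "SD_class_adj n (SD_class n u) (SD_class n v)" and le: "snd u \<le> snd v"
  shows "\<exists>z \<in> carrier (SD n). u \<in> generate (SD n) {z} \<and> v \<in> generate (SD n) {z}"
proof -
  interpret group "SD n" by (rule SD_group[OF n])
  have gen: "w \<in> generate (SD n) {w}" "(0, 0) \<in> generate (SD n) {w}" for w
    using generate.incl[of w "{w}" "SD n"] generate.one[of "SD n" "{w}"] by (auto simp: SD_one)
  have witness: "?thesis" if "z \<in> carrier (SD n)" "u \<in> generate (SD n) {z}" "v \<in> generate (SD n) {z}" for z
    by (rule bexI[of _ z]) (use that in simp_all)
  obtain a b where u': "u = (a, b)" "a < 4*n" "b < 2" using u by (cases u) (auto simp: SD_carrier)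
  obtain c d where v': "v = (c, d)" "c < 4*n" "d < 2" using v by (cases v) (auto simp: SD_carrier)
  have "b = 0 \<or> b = 1" "d = 0 \<or> d = 1" "b \<le> d" using u' v' le by auto
  then consider "u = (0, 0)" | "v = (0, 0)" | "b = 0" "d = 0" | "a \<noteq> 0" "b = 0" "d = 1" | "b = 1" "d = 1"
    using u' by (elim disjE) auto
  then show ?thesis
  proof cases
    case 1
    then show ?thesis using witness[OF v] gen by simp
  next
    case 2
    then show ?thesis using witness[OF u] gen by simp
  next
    case 3
    have "(1, 0) \<in> carrier (SD n)" using n by (simp add: SD_carrier)
    then show ?thesis
      by (rule witness) (use SD_rotation_mem_generate[OF n] u' v' 3 in simp_all)
  next
    case 4
    then have "a = 2*n" "odd c" using SD_class_adj_rotation_reflection[OF _ v'(2)] adj u' v' by simp_all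
    then have "u \<in> generate (SD n) {v}" using generate_SD_reflection_odd[OF n v'(2)] u' v' 4 by simp
    then show ?thesis using witness[OF v] gen by simp
  next
    case 5
    then have "c \<noteq> a" using u' v' \<open>u \<noteq> v\<close> by simp
    then have "odd a" "c = (a + 2*n) mod (4*n)"
      using SD_class_adj_reflections[OF u'(2) v'(2)] adj u' v' 5 by simp_all
    then have "v \<in> generate (SD n) {u}" using generate_SD_reflection_odd[OF n u'(2)] u' v' 5 by simp
    then show ?thesis using witness[OF u] gen by simp
  qed
qed

lemma enhanced_power_adj_SD_iff:
  assumes n: "1 \<le> n"
  shows "enhanced_power_adj (SD n) u v \<longleftrightarrow> u \<in> carrier (SD n) \<and> v \<in> carrier (SD n) \<and> u \<noteq> v
    \<and> SD_class_adj n (SD_class n u) (SD_class n v)" (is "_ \<longleftrightarrow> ?R")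
proof
  assume "enhanced_power_adj (SD n) u v"
  then show ?R unfolding enhanced_power_adj_def using SD_class_adj_if_common_cyclic[OF n] by blast
next
  assume H: ?R
  then have "\<exists>z \<in> carrier (SD n). u \<in> generate (SD n) {z} \<and> v \<in> generate (SD n) {z}"
  proof (cases "snd u \<le> snd v")
    case True
    then show ?thesis using SD_common_cyclic_if_class_adj_ordered[OF n, of u v] H by blast
  next
    case False
    moreover have "SD_class_adj n (SD_class n v) (SD_class n u)" using H SD_class_adj_sym by blast
    ultimately show ?thesis using SD_common_cyclic_if_class_adj_ordered[OF n, of v u] H by auto
  qed
  then show "enhanced_power_adj (SD n) u v" using H by (simp add: enhanced_power_adj_def)
qed

definition SD_class_card :: "nat \<Rightarrow> nat \<Rightarrow> nat" where
  "SD_class_card n d = (if d \<le> 1 then 1 else if d = 2 then 4*n - 2 else if d \<le> n + 2 then 2 else 2*n)"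

lemma SD_class_fiber:
  assumes n: "1 \<le> n" and d: "d < n + 4"
  shows "{v \<in> carrier (SD n). SD_class n v = d} =
    (if d = 0 then {(0, 0)} else if d = 1 then {(2*n, 0)}
     else if d = 2 then (\<lambda>i. (i, 0)) ` ({1..<4*n} - {2*n})
     else if d \<le> n + 2 then {(2*(d - 3) + 1, 1), (2*(d - 3) + 1 + 2*n, 1)}
     else (\<lambda>s. (2*s, 1)) ` {..<2*n})"
proof -
  have fiber_split: "{v \<in> carrier (SD n). SD_class n v = d} =
      (\<lambda>i. (i, 0)) ` {i. i < 4*n \<and> SD_class n (i, 0) = d}
      \<union> (\<lambda>i. (i, 1)) ` {i. i < 4*n \<and> SD_class n (i, 1) = d}"
    by (auto simp: SD_carrier less_2_cases_iff)
  consider "d \<le> 2" | "3 \<le> d" "d \<le> n + 2" | "d = n + 3" using d by linarith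
  then show ?thesis
  proof cases
    case 1
    have "SD_class n (i, 1) \<noteq> d" for i using SD_class_reflection_ge[of n i] 1 by linarith
    then have "{i. i < 4*n \<and> SD_class n (i, 1) = d} = {}" by simp
    moreover have "{i. i < 4*n \<and> SD_class n (i, 0) = d} =
        (if d = 0 then {0} else if d = 1 then {2*n} else {1..<4*n} - {2*n})"
      using 1 n by (auto simp: SD_class.simps split: if_splits)
    ultimately show ?thesis unfolding fiber_split using 1 by auto
  next
    case 2
    define i where "i = 2*(d - 3) + 1"
    have i: "odd i" "i < 2*n" using 2 by (auto simp: i_def)
    have ci: "SD_class n (i, 1) = d" using i 2 by (simp add: SD_class.simps i_def)
    have "{i'. i' < 4*n \<and> SD_class n (i', 1) = d} = {i, i + 2*n}"
      using SD_class_reflection_eq_iff[OF i(1), of n] i ci by (auto simp: add_half_mod_if)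
    moreover have "SD_class n (i, 0) \<noteq> d" for i using SD_class_rotation_le[of n i] 2 by linarith
    then have "{i. i < 4*n \<and> SD_class n (i, 0) = d} = {}" by simp
    ultimately show ?thesis unfolding fiber_split using 2 by (auto simp: i_def)
  next
    case 3
    have "{i. i < 4*n \<and> SD_class n (i, 1) = d} = {i. i < 4*n \<and> even i}"
      using half_mod_double_less[of n] n 3 by (auto simp: SD_class.simps) (metis less_irrefl)+
    also have "\<dots> = (\<lambda>s. 2*s) ` {..<2*n}" by (auto elim!: evenE)
    moreover have "SD_class n (i, 0) \<noteq> d" for i using SD_class_rotation_le[of n i] 3 by linarith
    then have "{i. i < 4*n \<and> SD_class n (i, 0) = d} = {}" by simp
    ultimately show ?thesis unfolding fiber_split using 3 by (auto simp: image_image)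
  qed
qed

lemma card_SD_class:
  assumes n: "1 \<le> n" and d: "d < n + 4"
  shows "card {v \<in> carrier (SD n). SD_class n v = d} = SD_class_card n d"
proof -
  have "card ((\<lambda>i. (i, 0::nat)) ` ({1..<4*n} - {2*n})) = 4*n - 2"
    using n by (subst card_image) (auto simp: inj_on_def)
  moreover have "card ((\<lambda>s. (2*s, 1::nat)) ` {..<2*n}) = 2*n"
    by (subst card_image) (auto simp: inj_on_def)
  ultimately show ?thesis
    unfolding SD_class_fiber[OF assms] SD_class_card_def using n d by auto
qed

lemma ex_SD_class:
  assumes "1 \<le> n" and "d < n + 4"
  shows "\<exists>v \<in> carrier (SD n). SD_class n v = d"
proof -
  have "card {v \<in> carrier (SD n). SD_class n v = d} \<noteq> 0"
    using card_SD_class[OF assms] assms(1) by (simp add: SD_class_card_def)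
  then have "{v \<in> carrier (SD n). SD_class n v = d} \<noteq> {}" by (metis card.empty)
  then show ?thesis by blast
qed

section \<open>The Sombor spectrum of the enhanced power graph\<close>

definition SD_class_deg :: "nat \<Rightarrow> nat \<Rightarrow> nat" where
  "SD_class_deg n c = (if c = 0 then 8*n - 1 else if c = 1 then 6*n - 1 else if c = 2 then 4*n - 1
     else if c \<le> n + 2 then 3 else 1)"

lemma SD_class_deg_eq_sum:
  assumes n: "1 \<le> n" and c: "c < n + 4"
  shows "(\<Sum>d<n + 4. if SD_class_adj n c d then SD_class_card n d - (if c = d then 1 else 0) else 0)
    = SD_class_deg n c"
proof -
  define h where "h d = (if SD_class_adj n c d then SD_class_card n d - (if c = d then 1 else 0) else 0)"
    for d
  have "{..<n + 4} = {0, 1, 2, n + 3} \<union> {3..<n + 3}" by auto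
  then have "(\<Sum>d<n + 4. h d) = h 0 + h 1 + h 2 + h (n + 3) + (\<Sum>d\<in>{3..<n + 3}. h d)"
    by (simp add: sum.union_disjoint add.assoc)
  also have "(\<Sum>d\<in>{3..<n + 3}. h d) =
      (if c \<le> 1 then 2*n else if 3 \<le> c \<and> c \<le> n + 2 then 1 else 0)"
  proof -
    consider "c \<le> 1" | "c = 2 \<or> c = n + 3" | "3 \<le> c \<and> c \<le> n + 2" using c by linarith
    then show ?thesis
    proof cases
      case 1
      then have "(\<Sum>d\<in>{3..<n + 3}. h d) = (\<Sum>d\<in>{3..<n + 3}. 2)"
        by (intro sum.cong) (auto simp: h_def SD_class_adj_def SD_class_card_def)
      then show ?thesis using 1 by simp
    next
      case 2
      then have "(\<Sum>d\<in>{3..<n + 3}. h d) = 0"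
        by (intro sum.neutral) (auto simp: h_def SD_class_adj_def)
      then show ?thesis using 2 by auto
    next
      case 3
      then have "(\<Sum>d\<in>{3..<n + 3}. h d) = (\<Sum>d\<in>{3..<n + 3}. if d = c then 1 else 0)"
        by (intro sum.cong) (auto simp: h_def SD_class_adj_def SD_class_card_def)
      then show ?thesis using 3 by simp
    qed
  qed
  also have "h 0 + h 1 + h 2 + h (n + 3) + \<dots> = SD_class_deg n c"
    using n c by (auto simp: h_def SD_class_adj_def SD_class_card_def SD_class_deg_def)
  finally show ?thesis unfolding h_def .
qed

lemma graph_deg_SD:
  assumes n: "1 \<le> n" and u: "u \<in> carrier (SD n)"
  shows "graph_deg (carrier (SD n)) (enhanced_power_adj (SD n)) u = SD_class_deg n (SD_class n u)"
proof -
  have "graph_deg (carrier (SD n)) (enhanced_power_adj (SD n)) u =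
      (\<Sum>d<n + 4. if SD_class_adj n (SD_class n u) d
        then card {v \<in> carrier (SD n). SD_class n v = d} - (if SD_class n u = d then 1 else 0) else 0)"
    using u SD_class_less enhanced_power_adj_SD_iff[OF n]
    by (intro graph_deg_class_adjacency) (auto simp: SD_carrier)
  also have "\<dots> = (\<Sum>d<n + 4. if SD_class_adj n (SD_class n u) d
        then SD_class_card n d - (if SD_class n u = d then 1 else 0) else 0)"
    by (intro sum.cong) (simp_all add: card_SD_class[OF n])
  also have "\<dots> = SD_class_deg n (SD_class n u)"
    by (rule SD_class_deg_eq_sum[OF n SD_class_less[OF u]])
  finally show ?thesis .
qed

definition SD_sombor_weight :: "nat \<Rightarrow> nat \<Rightarrow> nat \<Rightarrow> real" where
  "SD_sombor_weight n c d = (if SD_class_adj n c d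
     then sqrt (real (SD_class_deg n c)^2 + real (SD_class_deg n d)^2) else 0)"

lemma sqrt_two_mult_square: "sqrt (2 * x^2) = \<bar>x\<bar> * sqrt 2"
  by (simp add: real_sqrt_mult mult.commute)

lemma sqrt_18: "sqrt 18 = 3 * sqrt 2"
  using sqrt_two_mult_square[of 3] by simp

lemma quotient_matrix_SD_eq_Qmat:
  assumes n: "1 \<le> n" and V: "set vs = carrier (SD n)"
  shows "quotient_matrix vs (SD_class n) (n + 4) (SD_sombor_weight n) = Qmat n"
proof (rule eq_matI)
  fix c d assume "c < dim_row (Qmat n)" "d < dim_col (Qmat n)"
  then have c: "c < n + 4" and d: "d < n + 4" by (auto simp: Qmat_def Let_def)
  have r: "real (8*n - 1) = 8 * real n - 1" "real (6*n - 1) = 6 * real n - 1"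
    "real (4*n - 1) = 4 * real n - 1" "real (4*n - 2) = 4 * real n - 2"
    using n by (auto simp: of_nat_diff)
  have "4 * real n - 1 \<ge> 0" using n by simp
  moreover have "c = 0 \<or> c = 1 \<or> c = 2 \<or> (3 \<le> c \<and> c \<le> n + 2) \<or> c = n + 3"
    "d = 0 \<or> d = 1 \<or> d = 2 \<or> (3 \<le> d \<and> d \<le> n + 2) \<or> d = n + 3" using c d by linarith+
  ultimately show "quotient_matrix vs (SD_class n) (n + 4) (SD_sombor_weight n) $$ (c, d) = Qmat n $$ (c, d)"
    using c d n card_SD_class[OF n d] V
    by (elim disjE conjE) (simp_all add: quotient_matrix_def Qmat_def Let_def SD_sombor_weight_def
        SD_class_deg_def SD_class_card_def SD_class_adj_def r sqrt_two_mult_square sqrt_18 add.commute)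
qed (auto simp: quotient_matrix_def Qmat_def Let_def)

lemma sum_singleton_mset_const: "finite A \<Longrightarrow> (\<Sum>a\<in>A. {#x#}) = replicate_mset (card A) x"
  by (induction A rule: finite_induct) auto

lemma SD_sombor_class_eigenvalues:
  assumes n: "1 \<le> n"
  shows "(\<Sum>d<n + 4. replicate_mset (SD_class_card n d - 1) (complex_of_real (- SD_sombor_weight n d d)))
    = replicate_mset (4*n - 3) (complex_of_real (- (4 * real n - 1) * sqrt 2))
      + replicate_mset (2*n - 1) 0 + replicate_mset n (complex_of_real (- 3 * sqrt 2))"
proof -
  define m where "m d = replicate_mset (SD_class_card n d - 1) (complex_of_real (- SD_sombor_weight n d d))"
    for d
  have "{..<n + 4} = {0, 1, 2, n + 3} \<union> {3..<n + 3}" by auto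
  then have "(\<Sum>d<n + 4. m d) = m 0 + m 1 + m 2 + m (n + 3) + (\<Sum>d\<in>{3..<n + 3}. m d)"
    by (simp add: sum.union_disjoint add.assoc)
  also have "(\<Sum>d\<in>{3..<n + 3}. m d) = (\<Sum>d\<in>{3..<n + 3}. {# complex_of_real (- 3 * sqrt 2) #})"
    using sqrt_18 by (intro sum.cong)
      (simp_all add: m_def SD_class_card_def SD_sombor_weight_def SD_class_adj_def SD_class_deg_def)
  also have "\<dots> = replicate_mset n (complex_of_real (- 3 * sqrt 2))"
    by (simp add: sum_singleton_mset_const)
  also have "m 0 + m 1 + m 2 + m (n + 3) =
      replicate_mset (4*n - 3) (complex_of_real (- (4 * real n - 1) * sqrt 2)) + replicate_mset (2*n - 1) 0"
  proof -
    have "real (4*n - 1) = 4 * real n - 1" "4 * real n - 1 \<ge> 0" using n by (auto simp: of_nat_diff)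
    then have "SD_sombor_weight n 2 2 = (4 * real n - 1) * sqrt 2"
      using n by (simp add: SD_sombor_weight_def SD_class_adj_def SD_class_deg_def sqrt_two_mult_square)
    moreover have "SD_class_card n 2 - 1 = 4*n - 3" by (simp add: SD_class_card_def)
    ultimately have "m 2 = replicate_mset (4*n - 3) (complex_of_real (- (4 * real n - 1) * sqrt 2))"
      unfolding m_def mult_minus_left by (simp only:)
    moreover have "SD_sombor_weight n (n + 3) (n + 3) = 0"
      by (simp add: SD_sombor_weight_def SD_class_adj_def)
    ultimately show ?thesis by (simp add: m_def SD_class_card_def)
  qed
  finally show ?thesis unfolding m_def .
qed

theorem theorem5p4:
  fixes n :: nat and vs :: "(nat \<times> nat) list"
  assumes "n \<ge> 2"
    and "distinct vs" and "set vs = carrier (SD n)"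
  shows "spectrum_mset (sombor_matrix vs (enhanced_power_adj (SD n))) =
           replicate_mset (4*n - 3) (complex_of_real (- (4*real n - 1) * sqrt 2))
         + replicate_mset (2*n - 1) 0
         + replicate_mset n (complex_of_real (- 3 * sqrt 2))
         + spectrum_mset (Qmat n)"
proof -
  have n: "1 \<le> n" using assms(1) by simp
  have card: "card {v \<in> set vs. SD_class n v = d} = SD_class_card n d" if "d < n + 4" for d
    using card_SD_class[OF n that] assms(3) by simp
  have "sombor_matrix vs (enhanced_power_adj (SD n)) = class_matrix vs (SD_class n) (SD_sombor_weight n)"
    unfolding SD_sombor_weight_def using assms(2,3) enhanced_power_adj_SD_iff[OF n] graph_deg_SD[OF n]
    by (intro sombor_matrix_eq_class_matrix) auto
  also have "spectrum_mset \<dots> = spectrum_mset (quotient_matrix vs (SD_class n) (n + 4) (SD_sombor_weight n))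
      + (\<Sum>d<n + 4. replicate_mset (card {v \<in> set vs. SD_class n v = d} - 1)
          (complex_of_real (- SD_sombor_weight n d d)))"
    using assms(2,3) SD_class_less ex_SD_class[OF n] by (intro spectrum_mset_class_matrix) auto
  finally show ?thesis
    using card quotient_matrix_SD_eq_Qmat[OF n assms(3)] SD_sombor_class_eigenvalues[OF n]
    by (simp add: ac_simps)
qed

end
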